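(* Let $N\ge2$, $b_1,\dots,b_N\in\{0,1\}$ with $b_N=1$ and $\sum_j b_j2^{N-j}>1$, and let $\rho$ be the largest real root of $x^N-\sum_{j=1}^N b_jx^{N-j}$, so $1=\sum_{k=1}^N b_k\rho^{-k}$. Let $I_k=[0,\rho^{-k}]$, $1\le k\le N$. In dimension $1$, $\rho I_1=[0,1]$ is partitioned into the intervals $I_k$ with $b_k=1$ placed edge to edge, and $\rho I_k=I_{k-1}$ for $2\le k\le N$. For $d\ge1$, let the tiles be the boxes $I_{k_1}\times\cdots\times I_{k_d}$ (and their copies), and decompose each inflated box $\rho(I_{k_1}\times\cdots\times I_{k_d})=\rho I_{k_1}\times\cdots\times\rho I_{k_d}$ as the cartesian product of the one-dimensional decompositions of the factors. Then the tessellations of $\mathbb{R}^d$ constructed by inflation from these decompositions are aperiodic (not periodic).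
   Context: Sets are essentially disjoint if their intersection has Lebesgue measure $0$. A tessellation of $\mathbb{R}^d$ is a covering by pairwise essentially disjoint tiles of finitely many types; constructing by inflation means iterating the decomposition of the inflated tiles $\rho^n R$ to cover increasing regions of $\mathbb{R}^d$. A tessellation is periodic if it is invariant under translation by a lattice (a discrete additive subgroup of rank $d$) of $\mathbb{R}^d$. *)

theory Defs
  imports "HOL-Analysis.Analysis"
begin

text \<open>One-dimensional decomposition of the inflated interval \<open>\<rho> I_k\<close>, given as a set of
  pairs (type j, left endpoint), where \<open>I_j = [0, \<rho>^-j]\<close>.\<close>
definition sub1 :: "(nat \<Rightarrow> nat) \<Rightarrow> real \<Rightarrow> nat \<Rightarrow> nat \<Rightarrow> (nat \<times> real) set" where
  "sub1 b \<rho> N k =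
     (if k = 1 then {(j, \<Sum>i\<in>{1..<j}. real (b i) / \<rho> ^ i) | j. j \<in> {1..N} \<and> b j = 1}
      else {(k - 1, 0)})"

text \<open>d-dimensional decomposition: cartesian product of the one-dimensional ones.
  A tile type is a function assigning to each coordinate an index in {1..N}.\<close>
definition subd :: "(nat \<Rightarrow> nat) \<Rightarrow> real \<Rightarrow> nat \<Rightarrow> ('n::finite \<Rightarrow> nat)
                    \<Rightarrow> (('n \<Rightarrow> nat) \<times> (real^'n)) set" where
  "subd b \<rho> N t = {(s, u). \<forall>i. (s i, u $ i) \<in> sub1 b \<rho> N (t i)}"

text \<open>Decomposition of \<open>\<rho>^n R_t\<close> (R_t the box of type t at the origin) obtained by
  iterating the decomposition n times; again pairs (type, translation).\<close>
fun supertile :: "(nat \<Rightarrow> nat) \<Rightarrow> real \<Rightarrow> nat \<Rightarrow> nat \<Rightarrow> ('n::finite \<Rightarrow> nat)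
                   \<Rightarrow> (('n \<Rightarrow> nat) \<times> (real^'n)) set" where
  "supertile b \<rho> N 0 t = {(t, 0)}"
| "supertile b \<rho> N (Suc n) t =
     {(s', (\<rho> ^ n) *\<^sub>R u + w) | s u s' w. (s, u) \<in> subd b \<rho> N t \<and> (s', w) \<in> supertile b \<rho> N n s}"

definition tile :: "real \<Rightarrow> ('n::finite \<Rightarrow> nat) \<Rightarrow> real^'n \<Rightarrow> (real^'n) set" where
  "tile \<rho> t u = {x. \<forall>i. u $ i \<le> x $ i \<and> x $ i \<le> u $ i + 1 / \<rho> ^ (t i)}"

definition patch :: "(nat \<Rightarrow> nat) \<Rightarrow> real \<Rightarrow> nat \<Rightarrow> nat \<Rightarrow> ('n::finite \<Rightarrow> nat) \<Rightarrow> (real^'n)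
                     \<Rightarrow> (real^'n) set set" where
  "patch b \<rho> N n t v = {tile \<rho> s (v + w) | s w. (s, w) \<in> supertile b \<rho> N n t}"

definition tessellation :: "(real^'n::finite) set set \<Rightarrow> bool" where
  "tessellation T \<longleftrightarrow> \<Union>T = UNIV \<and>
     (\<forall>A\<in>T. \<forall>B\<in>T. A \<noteq> B \<longrightarrow> A \<inter> B \<in> sets lebesgue \<and> emeasure lebesgue (A \<inter> B) = 0)"

definition inflation_tessellation ::
  "(nat \<Rightarrow> nat) \<Rightarrow> real \<Rightarrow> nat \<Rightarrow> (real^'n::finite) set set \<Rightarrow> bool" where
  "inflation_tessellation b \<rho> N T \<longleftrightarrow> tessellation T \<and>
     (\<exists>(t :: nat \<Rightarrow> 'n \<Rightarrow> nat) (v :: nat \<Rightarrow> real^'n).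
        (\<forall>n i. t n i \<in> {1..N}) \<and>
        (\<forall>n. patch b \<rho> N n (t n) (v n) \<subseteq> patch b \<rho> N (Suc n) (t (Suc n)) (v (Suc n))) \<and>
        T = (\<Union>n. patch b \<rho> N n (t n) (v n)))"

text \<open>Lattice: discrete additive subgroup of rank d (a discrete subgroup has rank d iff
  it spans \<open>\<real>^d\<close>).\<close>
definition lattice :: "(real^'n::finite) set \<Rightarrow> bool" where
  "lattice L \<longleftrightarrow> 0 \<in> L \<and> (\<forall>x\<in>L. \<forall>y\<in>L. x - y \<in> L) \<and>
     (\<exists>e>0. \<forall>x\<in>L. \<forall>y\<in>L. x \<noteq> y \<longrightarrow> e \<le> dist x y) \<and> span L = UNIV"

definition periodic :: "(real^'n::finite) set set \<Rightarrow> bool" where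
  "periodic T \<longleftrightarrow> (\<exists>L. lattice L \<and> (\<forall>l\<in>L. (\<lambda>A. (\<lambda>x. l + x) ` A) ` T = T))"

end

theory Submission
  imports Defs
begin

text \<open>Suppose the tessellation \<open>T\<close> were invariant under a lattice. Because both the tiles and
  the decompositions are products, the tiles of \<open>T\<close> project to every coordinate axis onto a
  one-dimensional tiling by copies of the intervals \<open>I\<^sub>k\<close>; it contains inflated supertiles
  of all levels and, for a suitable axis, it is invariant under a translation \<open>p > 0\<close>.
  Counting the tiles of each type in a long window of length \<open>L\<close> gives \<open>L/p\<close> times the
  integer vector \<open>f\<close> of tile counts per period, up to a bounded error. The tile counts of the
  supertiles are governed by the integer substitution matrix \<open>M\<close>, and comparing a supertile of
  level \<open>m\<close> with its sub-supertile of level \<open>m - j\<close> (where \<open>b\<^sub>j = 1\<close>) yields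
  \<open>M\<^sup>j f = \<rho>\<^sup>j f\<close>. Hence \<open>\<rho>\<^sup>j\<close> is rational for all \<open>j\<close> with \<open>b\<^sub>j = 1\<close>, which
  contradicts \<open>\<Sum>\<^sub>j b\<^sub>j \<rho>\<^sup>-\<^sup>j = 1\<close> by the rational root test.\<close>

lemma sum_div_power_eq_one_if_root:
  fixes \<rho> :: real
  assumes "\<rho> \<noteq> 0" and "\<rho> ^ N - (\<Sum>j=1..N. real (b j) * \<rho> ^ (N - j)) = 0"
  shows "(\<Sum>j=1..N. real (b j) / \<rho> ^ j) = 1"
proof -
  have "(\<Sum>j=1..N. real (b j) / \<rho> ^ j) = (\<Sum>j=1..N. real (b j) * \<rho> ^ (N - j)) / \<rho> ^ N"
    unfolding sum_divide_distrib
  proof (rule sum.cong[OF refl])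
    fix j assume "j \<in> {1..N}"
    then have "\<rho> ^ N = \<rho> ^ (N - j) * \<rho> ^ j" by (simp add: power_add[symmetric])
    then show "real (b j) / \<rho> ^ j = real (b j) * \<rho> ^ (N - j) / \<rho> ^ N"
      using assms(1) by (simp add: field_simps)
  qed
  also have "(\<Sum>j=1..N. real (b j) * \<rho> ^ (N - j)) = \<rho> ^ N" using assms(2) by simp
  finally show ?thesis using assms(1) by simp
qed

lemma sum_digits_ge_two:
  assumes "N \<ge> 2" and "\<forall>j\<in>{1..N}. b j \<in> {0, 1}" and "b N = 1"
    and "(\<Sum>j=1..N. b j * 2 ^ (N - j)) > (1 :: nat)"
  shows "(\<Sum>j=1..N. real (b j)) \<ge> 2"
proof -
  have split: "{1..N} = insert N {1..<N}" using assms(1) by auto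
  have "\<exists>j0\<in>{1..<N}. b j0 = 1"
  proof (rule ccontr)
    assume "\<not> (\<exists>j0\<in>{1..<N}. b j0 = 1)"
    then have "\<forall>j\<in>{1..<N}. b j = 0" using assms(2) by fastforce
    then have "(\<Sum>j=1..N. b j * 2 ^ (N - j)) = 1" unfolding split using assms(3) by simp
    then show False using assms(4) by simp
  qed
  then obtain j0 where j0: "j0 \<in> {1..<N}" "b j0 = 1" by blast
  have "(\<Sum>j\<in>{j0, N}. real (b j)) \<le> (\<Sum>j=1..N. real (b j))"
    by (rule sum_mono2) (use j0 assms(1) in auto)
  then show ?thesis using j0 assms(3) by simp
qed

lemma largest_root_gt_one:
  fixes \<rho> :: real
  assumes "N \<ge> 2" and "\<forall>j\<in>{1..N}. b j \<in> {0, 1}" and "b N = 1"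
    and "(\<Sum>j=1..N. b j * 2 ^ (N - j)) > (1 :: nat)"
    and "\<forall>x::real. x ^ N - (\<Sum>j=1..N. real (b j) * x ^ (N - j)) = 0 \<longrightarrow> x \<le> \<rho>"
  shows "\<rho> > 1"
proof -
  define f where "f x = x ^ N - (\<Sum>j=1..N. real (b j) * x ^ (N - j))" for x :: real
  have "f 1 < 0" unfolding f_def using sum_digits_ge_two[OF assms(1-4)] by simp
  define X where "X = real N + 1"
  have X: "X \<ge> 1" unfolding X_def by simp
  have "(\<Sum>j=1..N. real (b j) * X ^ (N - j)) \<le> (\<Sum>j=1..N. X ^ (N - 1))"
  proof (rule sum_mono)
    fix j assume j: "j \<in> {1..N}"
    have "real (b j) \<le> 1" using assms(2) j by fastforce
    moreover have "X ^ (N - j) \<le> X ^ (N - 1)" using j X by (intro power_increasing) auto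
    ultimately have "real (b j) * X ^ (N - j) \<le> 1 * X ^ (N - 1)"
      using X by (intro mult_mono) auto
    then show "real (b j) * X ^ (N - j) \<le> X ^ (N - 1)" by simp
  qed
  also have "\<dots> < X * X ^ (N - 1)" using X unfolding X_def by simp
  also have "X * X ^ (N - 1) = X ^ N" using assms(1) by (simp add: power_Suc[symmetric])
  finally have "f X > 0" unfolding f_def by simp
  have "continuous_on {1..X} f" unfolding f_def by (intro continuous_intros)
  then obtain x where x: "1 \<le> x" "x \<le> X" "f x = 0"
    using IVT'[of f 1 0 X] \<open>f 1 < 0\<close> \<open>f X > 0\<close> X by auto
  have "x \<noteq> 1" using x(3) \<open>f 1 < 0\<close> by auto
  moreover have "x \<le> \<rho>" using assms(5) x(3) unfolding f_def by blast
  ultimately show ?thesis using x(1) by simp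
qed

text \<open>The rational root test for \<open>(\<Sum>i\<in>K. z\<^sup>i) = 1\<close> at \<open>z = 1/y\<close>: writing \<open>y = a/c\<close> in lowest
  terms and multiplying by \<open>a\<^sup>E\<close>, \<open>E = Max K\<close>, shows that \<open>a\<close> divides \<open>c\<^sup>E\<close>.\<close>
lemma sum_inverse_powers_ne_one_if_rational:
  fixes y :: real and K :: "nat set"
  assumes "y \<in> \<rat>" and "y > 1" and "finite K" and "K \<noteq> {}" and "0 \<notin> K"
  shows "(\<Sum>i\<in>K. 1 / y ^ i) \<noteq> 1"
proof
  assume sum_one: "(\<Sum>i\<in>K. 1 / y ^ i) = 1"
  obtain a c :: int where ac: "c > 0" "coprime a c" "y = of_int a / of_int c"
    using Rats_cases'[OF assms(1)] by blast
  have "(of_int c :: real) < of_int a" using assms(2) ac(1) unfolding ac(3) by (simp add: less_divide_eq_1)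
  then have "c < a" by simp
  define E where "E = Max K"
  have E: "E \<in> K" "\<And>i. i \<in> K \<Longrightarrow> i \<le> E" unfolding E_def using assms(3,4) by auto
  have "E \<noteq> 0" using E(1) assms(5) by (intro notI) simp
  have y_c: "y * of_int c = of_int a" unfolding ac(3) using ac(1) by simp
  have scaled_term: "of_int a ^ E / y ^ i = (of_int (c ^ i * a ^ (E - i)) :: real)" if "i \<in> K" for i
  proof -
    have "(of_int a :: real) ^ E = of_int a ^ (E - i) * of_int a ^ i"
      using E(2)[OF that] by (simp add: power_add[symmetric])
    also have "(of_int a :: real) ^ i = y ^ i * of_int c ^ i"
      unfolding y_c[symmetric] by (simp add: power_mult_distrib)
    finally show ?thesis using assms(2) by (simp add: divide_eq_eq)
  qed
  have "(of_int (\<Sum>i\<in>K. c ^ i * a ^ (E - i)) :: real) = (\<Sum>i\<in>K. of_int a ^ E / y ^ i)"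
    unfolding of_int_sum using scaled_term by (intro sum.cong) auto
  also have "\<dots> = of_int (a ^ E)"
    using sum_one by (simp add: sum_distrib_left[symmetric] divide_inverse)
  finally have eq: "(\<Sum>i\<in>K. c ^ i * a ^ (E - i)) = a ^ E"
    by (simp only: of_int_eq_iff)
  have dvd_rest: "a dvd (\<Sum>i\<in>K - {E}. c ^ i * a ^ (E - i))"
  proof (rule dvd_sum)
    fix i assume "i \<in> K - {E}"
    then have "E - i \<noteq> 0" using E(2) by fastforce
    then have "a dvd a ^ (E - i)" by (intro dvd_power) auto
    then show "a dvd c ^ i * a ^ (E - i)" by simp
  qed
  have "(\<Sum>i\<in>K. c ^ i * a ^ (E - i)) = c ^ E + (\<Sum>i\<in>K - {E}. c ^ i * a ^ (E - i))"
    using sum.remove[OF assms(3) E(1), of "\<lambda>i. c ^ i * a ^ (E - i)"] by simp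
  then have "c ^ E = a ^ E - (\<Sum>i\<in>K - {E}. c ^ i * a ^ (E - i))" using eq by simp
  moreover have "a dvd a ^ E" using \<open>E \<noteq> 0\<close> by (intro dvd_power) auto
  ultimately have "a dvd c ^ E" using dvd_diff[OF _ dvd_rest] by simp
  moreover have "coprime a (c ^ E)" using ac(2) by simp
  ultimately have "a = 1" using \<open>c < a\<close> ac(1) coprime_common_divisor_int[of a "c ^ E" a] by simp
  then show False using \<open>c < a\<close> ac(1) by simp
qed

lemma rational_power_exponent_dvd:
  fixes \<rho> :: real
  assumes "\<rho> \<noteq> 0" and "0 < r" and "\<rho> ^ r \<in> \<rat>" and "\<rho> ^ j \<in> \<rat>"
    and least: "\<And>r'. 0 < r' \<Longrightarrow> \<rho> ^ r' \<in> \<rat> \<Longrightarrow> r \<le> r'"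
  shows "r dvd j"
proof (rule ccontr)
  assume "\<not> r dvd j"
  then have m: "0 < j mod r" "j mod r < r" using assms(2) by (auto simp: dvd_eq_mod_eq_0)
  have "\<rho> ^ j = \<rho> ^ (r * (j div r) + j mod r)" by (simp only: mult_div_mod_eq)
  also have "\<dots> = (\<rho> ^ r) ^ (j div r) * \<rho> ^ (j mod r)" by (simp only: power_add power_mult)
  finally have "\<rho> ^ (j mod r) = \<rho> ^ j / (\<rho> ^ r) ^ (j div r)" using assms(1) by simp
  then have "\<rho> ^ (j mod r) \<in> \<rat>" using assms(3,4) by simp
  then have "r \<le> j mod r" by (rule least[OF m(1)])
  then show False using m(2) by simp
qed

lemma ex_power_not_rational:
  fixes \<rho> :: real and S :: "nat set"
  assumes "\<rho> > 1" and "finite S" and "S \<noteq> {}" and "0 \<notin> S"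
    and "(\<Sum>j\<in>S. 1 / \<rho> ^ j) = 1"
  shows "\<exists>j\<in>S. \<rho> ^ j \<notin> \<rat>"
proof (rule ccontr)
  assume "\<not> ?thesis"
  then have rat: "\<rho> ^ j \<in> \<rat>" if "j \<in> S" for j using that by blast
  define P where "P r \<longleftrightarrow> 0 < r \<and> \<rho> ^ r \<in> \<rat>" for r
  define r where "r = (LEAST r. P r)"
  obtain j0 where j0: "j0 \<in> S" using assms(3) by blast
  moreover have "j0 \<noteq> 0" using j0 assms(4) by (intro notI) simp
  ultimately have "P j0" unfolding P_def using rat by simp
  then have "P r" and "\<And>r'. P r' \<Longrightarrow> r \<le> r'"
    unfolding r_def by (auto intro: LeastI Least_le)
  then have r: "0 < r" "\<rho> ^ r \<in> \<rat>"
    and r_least: "\<And>r'. 0 < r' \<Longrightarrow> \<rho> ^ r' \<in> \<rat> \<Longrightarrow> r \<le> r'"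
    unfolding P_def by auto
  have r_dvd: "r dvd j" if "j \<in> S" for j
    using rational_power_exponent_dvd[OF _ r rat[OF that] r_least] assms(1) by simp
  then have power_div: "(\<rho> ^ r) ^ (j div r) = \<rho> ^ j" if "j \<in> S" for j
    using that by (simp add: power_mult[symmetric])
  define K where "K = (\<lambda>j. j div r) ` S"
  have inj: "inj_on (\<lambda>j. j div r) S"
  proof (rule inj_onI)
    fix j j' assume "j \<in> S" "j' \<in> S" "j div r = j' div r"
    then show "j = j'" using r_dvd by (metis dvd_mult_div_cancel)
  qed
  have "(\<Sum>i\<in>K. 1 / (\<rho> ^ r) ^ i) = (\<Sum>j\<in>S. 1 / \<rho> ^ j)"
    unfolding K_def sum.reindex[OF inj] o_def using power_div by simp
  moreover have "0 \<notin> K"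
  proof
    assume "0 \<in> K"
    then obtain j where "j \<in> S" "j div r = 0" unfolding K_def by auto
    then show False using assms(4) dvd_mult_div_cancel[OF r_dvd] by (metis mult_0_right)
  qed
  moreover have "\<rho> ^ r > 1" using assms(1) r(1) by (simp add: one_less_power)
  moreover have "finite K" "K \<noteq> {}" unfolding K_def using assms(2,3) by auto
  ultimately show False
    using sum_inverse_powers_ne_one_if_rational[of "\<rho> ^ r" K] r(2) assms(5) by auto
qed

locale inflation_rule =
  fixes N :: nat and b :: "nat \<Rightarrow> nat" and \<rho> :: real
  assumes N_ge_2: "N \<ge> 2" and digits_01: "\<forall>j\<in>{1..N}. b j \<in> {0, 1}" and b_N: "b N = 1"
    and rho_gt_1: "\<rho> > 1" and sum_digits: "(\<Sum>j=1..N. real (b j) / \<rho> ^ j) = 1"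
begin

text \<open>\<open>offset j\<close> is the left end point of the copy of \<open>I\<^sub>j\<close> in \<open>\<rho> I\<^sub>1\<close>.\<close>
definition offset :: "nat \<Rightarrow> real" where
  "offset j = (\<Sum>i\<in>{1..<j}. real (b i) / \<rho> ^ i)"

definition children :: "nat set" where
  "children = {j\<in>{1..N}. b j = 1}"

fun supertile1 :: "nat \<Rightarrow> nat \<Rightarrow> (nat \<times> real) set" where
  "supertile1 0 k = {(k, 0)}"
| "supertile1 (Suc n) k =
     {(s', \<rho> ^ n * u + w) | s u s' w. (s, u) \<in> sub1 b \<rho> N k \<and> (s', w) \<in> supertile1 n s}"

declare supertile1.simps(2)[simp del]

lemma rho_pos: "\<rho> > 0"
  using rho_gt_1 by simp

lemma digit_le_one: "j \<in> {1..N} \<Longrightarrow> b j \<le> 1"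
  using digits_01 by fastforce

lemma children_subset: "children \<subseteq> {1..N}"
  unfolding children_def by auto

lemma N_in_children: "N \<in> children"
  using N_ge_2 b_N unfolding children_def by auto

lemma finite_children: "finite children"
  using children_subset finite_subset by blast

lemma sum_children: "(\<Sum>j\<in>children. 1 / \<rho> ^ j) = 1"
proof -
  have "(\<Sum>j\<in>children. 1 / \<rho> ^ j) = (\<Sum>j\<in>{1..N}. if b j = 1 then 1 / \<rho> ^ j else 0)"
    unfolding children_def by (rule sum.inter_filter) simp
  also have "\<dots> = (\<Sum>j=1..N. real (b j) / \<rho> ^ j)"
  proof (rule sum.cong[OF refl])
    fix j assume "j \<in> {1..N}"
    then have "b j = 0 \<or> b j = 1" using digits_01 by auto
    then show "(if b j = 1 then 1 / \<rho> ^ j else 0) = real (b j) / \<rho> ^ j" by auto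
  qed
  finally show ?thesis using sum_digits by simp
qed

lemma sub1_one: "sub1 b \<rho> N 1 = (\<lambda>j. (j, offset j)) ` children"
  unfolding sub1_def children_def offset_def by auto

lemma sub1_ne_one: "k \<noteq> 1 \<Longrightarrow> sub1 b \<rho> N k = {(k - 1, 0)}"
  unfolding sub1_def by auto

lemma supertile1_Suc_ne_one: "k \<noteq> 1 \<Longrightarrow> supertile1 (Suc n) k = supertile1 n (k - 1)"
  unfolding supertile1.simps(2)[of n k] sub1_ne_one by auto

lemma supertile1_Suc_one:
  "supertile1 (Suc n) 1 = (\<Union>j\<in>children. (\<lambda>(k, w). (k, \<rho> ^ n * offset j + w)) ` supertile1 n j)"
  unfolding supertile1.simps(2)[of n 1] sub1_one by fastforce

lemma offset_nonneg: "offset j \<ge> 0"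
  unfolding offset_def using rho_pos by (auto intro!: sum_nonneg)

lemma offset_end_le:
  assumes "j \<in> children" and "j' \<in> {1..N}" and "j < j'"
  shows "offset j + 1 / \<rho> ^ j \<le> offset j'"
proof -
  have "offset j' = offset j + (\<Sum>i\<in>{j..<j'}. real (b i) / \<rho> ^ i)"
    unfolding offset_def using assms children_subset
    by (metis (no_types, lifting) atLeastAtMost_iff le_eq_less_or_eq subset_iff
        sum.atLeastLessThan_concat)
  moreover have "(\<Sum>i\<in>{j}. real (b i) / \<rho> ^ i) \<le> (\<Sum>i\<in>{j..<j'}. real (b i) / \<rho> ^ i)"
    by (rule sum_mono2) (use assms rho_pos in auto)
  ultimately show ?thesis using assms(1) unfolding children_def by auto
qed

lemma offset_end_le_one:
  assumes "j \<in> children"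
  shows "offset j + 1 / \<rho> ^ j \<le> 1"
proof -
  have "offset j + 1 / \<rho> ^ j = (\<Sum>i\<in>{1..<Suc j}. real (b i) / \<rho> ^ i)"
    using assms unfolding offset_def children_def by auto
  also have "\<dots> \<le> (\<Sum>i\<in>{1..N}. real (b i) / \<rho> ^ i)"
    by (rule sum_mono2) (use assms children_subset rho_pos in auto)
  finally show ?thesis using sum_digits by simp
qed

lemma supertile1_bounds:
  assumes "t \<in> {1..N}" and "(k, w) \<in> supertile1 m t"
  shows "k \<in> {1..N} \<and> 0 \<le> w \<and> w + 1 / \<rho> ^ k \<le> \<rho> ^ m / \<rho> ^ t"
  using assms
proof (induction m arbitrary: t k w)
  case 0
  then show ?case by auto
next
  case (Suc m)
  show ?case
  proof (cases "t = 1")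
    case False
    then have "t - 1 \<in> {1..N}" "(k, w) \<in> supertile1 m (t - 1)"
      using Suc.prems supertile1_Suc_ne_one by auto
    then have "k \<in> {1..N} \<and> 0 \<le> w \<and> w + 1 / \<rho> ^ k \<le> \<rho> ^ m / \<rho> ^ (t - 1)"
      using Suc.IH by blast
    moreover have "\<rho> ^ m / \<rho> ^ (t - 1) = \<rho> ^ Suc m / \<rho> ^ t"
      using False Suc.prems(1) rho_pos by (cases t) (auto simp: field_simps)
    ultimately show ?thesis by simp
  next
    case True
    with Suc.prems obtain j w' where j: "j \<in> children" "(k, w') \<in> supertile1 m j"
        "w = \<rho> ^ m * offset j + w'"
      using supertile1_Suc_one by auto
    then have IH: "k \<in> {1..N} \<and> 0 \<le> w' \<and> w' + 1 / \<rho> ^ k \<le> \<rho> ^ m / \<rho> ^ j"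
      using Suc.IH children_subset by blast
    have "\<rho> ^ m * offset j + \<rho> ^ m / \<rho> ^ j = \<rho> ^ m * (offset j + 1 / \<rho> ^ j)"
      by (simp add: field_simps)
    also have "\<dots> \<le> \<rho> ^ m * 1"
      using offset_end_le_one[OF j(1)] rho_pos by (intro mult_left_mono) auto
    finally have "\<rho> ^ m * offset j + \<rho> ^ m / \<rho> ^ j \<le> \<rho> ^ Suc m / \<rho> ^ t"
      using True rho_pos by simp
    then show ?thesis using IH j offset_nonneg rho_pos by (auto intro: add_nonneg_nonneg)
  qed
qed

lemma finite_supertile1: "finite (supertile1 m t)"
proof (induction m arbitrary: t)
  case 0
  then show ?case by simp
next
  case (Suc m)
  have "finite (sub1 b \<rho> N t)"
    using sub1_one finite_children sub1_ne_one by (cases "t = 1") auto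
  moreover have "supertile1 (Suc m) t =
      (\<Union>(s, u)\<in>sub1 b \<rho> N t. (\<lambda>(s', w). (s', \<rho> ^ m * u + w)) ` supertile1 m s)"
    unfolding supertile1.simps(2)[of m t] by auto
  ultimately show ?case using Suc.IH by auto
qed

lemma supertile1_nonempty: "t \<in> {1..N} \<Longrightarrow> supertile1 m t \<noteq> {}"
proof (induction m arbitrary: t)
  case 0
  then show ?case by simp
next
  case (Suc m)
  show ?case
  proof (cases "t = 1")
    case True
    then show ?thesis using Suc.IH[of N] N_in_children children_subset supertile1_Suc_one by fastforce
  next
    case False
    then have "t - 1 \<in> {1..N}" using Suc.prems by auto
    then show ?thesis using Suc.IH supertile1_Suc_ne_one[OF False, of m] by simp
  qed
qed

definition tile_count :: "nat \<Rightarrow> nat \<Rightarrow> nat \<Rightarrow> real" where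
  "tile_count m t k = real (card {w. (k, w) \<in> supertile1 m t})"

text \<open>The substitution matrix acting on type-indexed vectors: a tile of type \<open>k\<close> arises by
  inflation from one of type \<open>k + 1\<close>, since \<open>\<rho> I\<^sub>k\<^sub>+\<^sub>1 = I\<^sub>k\<close>, or, if \<open>b k = 1\<close>,
  from one of type \<open>1\<close>.\<close>
definition subst_op :: "(nat \<Rightarrow> real) \<Rightarrow> nat \<Rightarrow> real" where
  "subst_op x k =
     (if k \<in> {1..N} then (if k < N then x (Suc k) else 0) + real (b k) * x 1 else 0)"

definition total_length :: "(nat \<Rightarrow> real) \<Rightarrow> real" where
  "total_length x = (\<Sum>k=1..N. x k / \<rho> ^ k)"

lemma finite_positions: "finite {w. (k, w) \<in> supertile1 m t}"
proof -
  have "{w. (k, w) \<in> supertile1 m t} \<subseteq> snd ` supertile1 m t" by force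
  then show ?thesis using finite_supertile1 finite_subset by blast
qed

lemma tile_count_0: "tile_count 0 t k = (if k = t then 1 else 0)"
  unfolding tile_count_def by auto

lemma tile_count_Suc_ne_one: "t \<noteq> 1 \<Longrightarrow> tile_count (Suc m) t = tile_count m (t - 1)"
  unfolding tile_count_def using supertile1_Suc_ne_one by (auto simp: fun_eq_iff)

lemma tile_count_outside:
  assumes "t \<in> {1..N}" and "k \<notin> {1..N}"
  shows "tile_count m t k = 0"
proof -
  have "{w. (k, w) \<in> supertile1 m t} = {}" using supertile1_bounds[OF assms(1)] assms(2) by blast
  then show ?thesis unfolding tile_count_def by simp
qed

lemma tile_count_Suc_one: "tile_count (Suc m) 1 k = (\<Sum>j\<in>children. tile_count m j k)"
proof -
  let ?pos = "\<lambda>j. (\<lambda>w. \<rho> ^ m * offset j + w) ` {w. (k, w) \<in> supertile1 m j}"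
  have eq: "{w. (k, w) \<in> supertile1 (Suc m) 1} = (\<Union>j\<in>children. ?pos j)"
    unfolding supertile1_Suc_one by force
  have disjoint: "?pos j \<inter> ?pos j' = {}" if ordered: "j \<in> children" "j' \<in> children" "j < j'" for j j'
  proof -
    have "\<rho> ^ m * offset j + w < \<rho> ^ m * offset j' + w'"
      if w: "(k, w) \<in> supertile1 m j" and w': "(k, w') \<in> supertile1 m j'" for w w'
    proof -
      have "w + 1 / \<rho> ^ k \<le> \<rho> ^ m / \<rho> ^ j" "0 \<le> w'"
        using supertile1_bounds[OF _ w] supertile1_bounds[OF _ w'] \<open>j \<in> children\<close>
          \<open>j' \<in> children\<close> children_subset by auto
      moreover have "1 / \<rho> ^ k > 0" using rho_pos by simp
      ultimately have "w < \<rho> ^ m / \<rho> ^ j" by linarith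
      then have "\<rho> ^ m * offset j + w < \<rho> ^ m * (offset j + 1 / \<rho> ^ j)"
        by (simp add: field_simps)
      also have "\<dots> \<le> \<rho> ^ m * offset j'"
        using offset_end_le[of j j'] ordered children_subset rho_pos by (intro mult_left_mono) auto
      finally show ?thesis using \<open>0 \<le> w'\<close> by linarith
    qed
    then show ?thesis by fastforce
  qed
  have "card {w. (k, w) \<in> supertile1 (Suc m) 1} = (\<Sum>j\<in>children. card (?pos j))"
    unfolding eq
  proof (rule card_UN_disjoint)
    show "\<forall>j\<in>children. \<forall>j'\<in>children. j \<noteq> j' \<longrightarrow> ?pos j \<inter> ?pos j' = {}"
      using disjoint by (metis Int_commute linorder_neqE_nat)
  qed (use finite_children finite_positions in auto)
  also have "\<dots> = (\<Sum>j\<in>children. card {w. (k, w) \<in> supertile1 m j})"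
    by (intro sum.cong refl card_image) (auto simp: inj_on_def)
  finally show ?thesis unfolding tile_count_def by simp
qed

lemma subst_op_sum:
  "finite A \<Longrightarrow> subst_op (\<lambda>k. \<Sum>j\<in>A. f j k) = (\<lambda>k. \<Sum>j\<in>A. subst_op (f j) k)"
  unfolding subst_op_def by (auto simp: fun_eq_iff sum.distrib sum_distrib_left)

lemma tile_count_Suc: "t \<in> {1..N} \<Longrightarrow> tile_count (Suc m) t = subst_op (tile_count m t)"
proof (induction m arbitrary: t)
  case 0
  show ?case
  proof (cases "t = 1")
    case True
    have "tile_count 1 1 k = subst_op (tile_count 0 1) k" for k
    proof -
      have "tile_count 1 1 k = (\<Sum>j\<in>children. if k = j then 1 else 0)"
        using tile_count_Suc_one[of 0 k] tile_count_0 by simp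
      also have "\<dots> = (if k \<in> children then 1 else 0)" using finite_children by simp
      also have "\<dots> = subst_op (tile_count 0 1) k"
        unfolding subst_op_def tile_count_0 children_def using digits_01 by auto
      finally show ?thesis .
    qed
    then show ?thesis using True by auto
  next
    case False
    then show ?thesis using 0 tile_count_Suc_ne_one[OF False, of 0]
      unfolding subst_op_def by (auto simp: fun_eq_iff tile_count_0)
  qed
next
  case (Suc m)
  show ?case
  proof (cases "t = 1")
    case True
    have "tile_count (Suc (Suc m)) 1 = (\<lambda>k. \<Sum>j\<in>children. subst_op (tile_count m j) k)"
      using tile_count_Suc_one Suc.IH children_subset by (auto simp: fun_eq_iff intro!: sum.cong)
    also have "\<dots> = subst_op (\<lambda>k. \<Sum>j\<in>children. tile_count m j k)"
      using subst_op_sum[OF finite_children] by metis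
    also have "\<dots> = subst_op (tile_count (Suc m) 1)"
      using tile_count_Suc_one by presburger
    finally show ?thesis using True by simp
  next
    case False
    then have "t - 1 \<in> {1..N}" using Suc.prems by auto
    then show ?thesis using Suc.IH[of "t - 1"] tile_count_Suc_ne_one[OF False] by simp
  qed
qed

lemma total_length_subst_op: "total_length (subst_op x) = \<rho> * total_length x"
proof -
  have N_split: "{1..N} = insert N {1..<N}" "{1..N} = insert 1 {2..N}" using N_ge_2 by auto
  have "total_length (subst_op x) = (\<Sum>k=1..N. (if k < N then x (Suc k) else 0) / \<rho> ^ k)
      + (\<Sum>k=1..N. real (b k) * x 1 / \<rho> ^ k)"
    unfolding total_length_def subst_op_def
    by (auto simp: sum.distrib add_divide_distrib intro!: sum.cong)
  also have "(\<Sum>k=1..N. real (b k) * x 1 / \<rho> ^ k) = x 1 * (\<Sum>k=1..N. real (b k) / \<rho> ^ k)"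
    by (auto simp: sum_distrib_left intro!: sum.cong)
  also have "\<dots> = x 1" using sum_digits by simp
  also have "(\<Sum>k=1..N. (if k < N then x (Suc k) else 0) / \<rho> ^ k) = (\<Sum>k=1..<N. x (Suc k) / \<rho> ^ k)"
    unfolding N_split(1) by simp
  also have "\<dots> = (\<Sum>k\<in>Suc ` {1..<N}. x k / \<rho> ^ (k - 1))"
    by (subst sum.reindex) auto
  also have "Suc ` {1..<N} = {2..N}"
    using N_ge_2 by (auto simp: image_iff)
  also have "(\<Sum>k=2..N. x k / \<rho> ^ (k - 1)) = \<rho> * (\<Sum>k=2..N. x k / \<rho> ^ k)"
    unfolding sum_distrib_left
  proof (intro sum.cong refl)
    fix k assume "k \<in> {2..N}"
    then have "\<rho> ^ k = \<rho> * \<rho> ^ (k - 1)" by (simp add: power_Suc[symmetric])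
    then show "x k / \<rho> ^ (k - 1) = \<rho> * (x k / \<rho> ^ k)" using rho_pos by (simp add: field_simps)
  qed
  also have "\<rho> * (\<Sum>k=2..N. x k / \<rho> ^ k) + x 1 = \<rho> * total_length x"
    unfolding total_length_def N_split(2) using rho_pos by (simp add: field_simps)
  finally show ?thesis .
qed

lemma total_length_tile_count: "t \<in> {1..N} \<Longrightarrow> total_length (tile_count m t) = \<rho> ^ m / \<rho> ^ t"
proof (induction m)
  case 0
  have "(\<Sum>k=1..N. (if k = t then 1 else 0) / \<rho> ^ k) = (\<Sum>k=1..N. if k = t then 1 / \<rho> ^ k else 0)"
    by (intro sum.cong) auto
  also have "\<dots> = 1 / \<rho> ^ t" using 0 by (simp add: sum.delta)
  finally show ?case unfolding total_length_def tile_count_0 by simp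
next
  case (Suc m)
  then show ?case using tile_count_Suc total_length_subst_op by simp
qed

lemma subst_op_iter_linear:
  "(subst_op ^^ j) (\<lambda>k. x k + c * y k) = (\<lambda>k. (subst_op ^^ j) x k + c * (subst_op ^^ j) y k)"
  by (induction j) (auto simp: subst_op_def fun_eq_iff algebra_simps)

lemma subst_op_bound:
  assumes "\<forall>k. \<bar>x k\<bar> \<le> B"
  shows "\<forall>k. \<bar>subst_op x k\<bar> \<le> 2 * B"
proof
  fix k
  have "0 \<le> B" using assms by (meson abs_ge_zero order_trans)
  show "\<bar>subst_op x k\<bar> \<le> 2 * B"
  proof (cases "k \<in> {1..N}")
    case True
    have "\<bar>(if k < N then x (Suc k) else 0)\<bar> \<le> B" using assms \<open>0 \<le> B\<close> by auto
    moreover have "\<bar>real (b k) * x 1\<bar> \<le> B"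
      using assms mult_mono[of "real (b k)" 1 "\<bar>x 1\<bar>" B] \<open>0 \<le> B\<close> digit_le_one[OF True]
      by (simp add: abs_mult)
    ultimately show ?thesis using True unfolding subst_op_def by (simp add: abs_triangle_ineq4)
  next
    case False
    then show ?thesis using \<open>0 \<le> B\<close> unfolding subst_op_def if_not_P[OF False] by simp
  qed
qed

lemma subst_op_iter_bound:
  assumes "\<forall>k. \<bar>x k\<bar> \<le> B"
  shows "\<forall>k. \<bar>(subst_op ^^ j) x k\<bar> \<le> 2 ^ j * B"
proof (induction j)
  case 0
  then show ?case using assms by simp
next
  case (Suc j)
  then show ?case using subst_op_bound[OF Suc.IH] by (simp add: algebra_simps)
qed

lemma subst_op_iter_Ints: "\<forall>k. x k \<in> \<int> \<Longrightarrow> (subst_op ^^ j) x k \<in> \<int>"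
  by (induction j arbitrary: k) (auto simp: subst_op_def)

lemma tile_count_iterate: "tile_count (n + j) 1 = (subst_op ^^ j) (tile_count n 1)"
proof (induction j)
  case 0
  then show ?case by simp
next
  case (Suc j)
  then show ?case using tile_count_Suc[of 1 "n + j"] N_ge_2 by simp
qed

lemma inverse_power_le_one: "1 / \<rho> ^ k \<le> 1"
  using rho_gt_1 by (simp add: divide_le_eq_1)

definition occurs :: "(nat \<times> real) set \<Rightarrow> nat \<Rightarrow> nat \<Rightarrow> real \<Rightarrow> bool" where
  "occurs D m t a \<longleftrightarrow> (\<forall>k w. (k, w) \<in> supertile1 m t \<longrightarrow> (k, a + w) \<in> D)"

lemma occurs_Suc_ne_one: "t \<noteq> 1 \<Longrightarrow> occurs D (Suc m) t a \<Longrightarrow> occurs D m (t - 1) a"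
  unfolding occurs_def using supertile1_Suc_ne_one by auto

lemma occurs_child:
  assumes "occurs D (Suc m) 1 a" and "j \<in> children"
  shows "occurs D m j (a + \<rho> ^ m * offset j)"
  unfolding occurs_def
proof (intro allI impI)
  fix k w assume "(k, w) \<in> supertile1 m j"
  then have "(k, \<rho> ^ m * offset j + w) \<in> supertile1 (Suc m) 1"
    unfolding supertile1_Suc_one using assms(2) by force
  then show "(k, a + \<rho> ^ m * offset j + w) \<in> D"
    using assms(1) unfolding occurs_def by (simp add: add.assoc)
qed

lemma occurs_type_one:
  "t \<in> {1..N} \<Longrightarrow> t \<le> m + 1 \<Longrightarrow> occurs D m t a \<Longrightarrow> occurs D (m + 1 - t) 1 a"
proof (induction m arbitrary: t)
  case 0
  then show ?case by (cases t) auto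
next
  case (Suc m)
  show ?case
  proof (cases "t = 1")
    case True
    then show ?thesis using Suc.prems by simp
  next
    case False
    then have "t - 1 \<in> {1..N}" "t - 1 \<le> m + 1" "occurs D m (t - 1) a"
      using Suc.prems occurs_Suc_ne_one by auto
    then have "occurs D (m + 1 - (t - 1)) 1 a" using Suc.IH by blast
    moreover have "m + 1 - (t - 1) = Suc m + 1 - t" using False Suc.prems by auto
    ultimately show ?thesis by simp
  qed
qed

lemma occurs_child_type_one:
  assumes "occurs D m 1 a" and "j \<in> children" and "j \<le> m"
  shows "\<exists>a'. occurs D (m - j) 1 a'"
proof -
  obtain m' where m': "m = Suc m'" using assms(2,3) children_subset by (cases m) auto
  then have "occurs D m' j (a + \<rho> ^ m' * offset j)" using occurs_child assms by simp
  then have "occurs D (m' + 1 - j) 1 (a + \<rho> ^ m' * offset j)"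
    using occurs_type_one[of j m'] assms m' children_subset by auto
  then show ?thesis using m' by auto
qed

end

lemma period_representative:
  fixes a p :: real
  assumes "p > 0"
  obtains m :: int where "0 \<le> a - of_int m * p" and "a - of_int m * p < p"
proof
  define m where "m = \<lfloor>a / p\<rfloor>"
  have "of_int m \<le> a / p" "a / p < of_int m + 1" unfolding m_def by simp_all
  then have "of_int m * p \<le> a" "a < (of_int m + 1) * p"
    using assms by (simp_all add: field_simps)
  then show "0 \<le> a - of_int m * p" "a - of_int m * p < p"
    by (simp_all add: algebra_simps)
qed

text \<open>\<open>D\<close> encodes a one-dimensional arrangement of tiles by the pairs (type \<open>k\<close>, left end
  point \<open>x\<close>) of its copies of \<open>I\<^sub>k\<close>.\<close>
locale periodic_pattern = inflation_rule +
  fixes D :: "(nat \<times> real) set" and p :: real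
  assumes period_pos: "p > 0"
    and pattern_types: "(k, x) \<in> D \<Longrightarrow> k \<in> {1..N}"
    and pattern_periodic: "(k, x + p) \<in> D \<longleftrightarrow> (k, x) \<in> D"
    and pattern_disjoint:
      "(k, x) \<in> D \<Longrightarrow> (k', x') \<in> D \<Longrightarrow> x \<le> x' \<Longrightarrow> (k, x) \<noteq> (k', x')
        \<Longrightarrow> x + 1 / \<rho> ^ k \<le> x'"
    and supertiles_occur: "\<exists>t\<in>{1..N}. \<exists>a. occurs D n t a"
begin

lemma packing_bound:
  assumes "finite F" and "F \<subseteq> D" and "\<forall>(k, x)\<in>F. lo \<le> x \<and> x + 1 / \<rho> ^ k \<le> hi"
    and "lo \<le> hi"
  shows "(\<Sum>(k, x)\<in>F. 1 / \<rho> ^ k) \<le> hi - lo"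
  using assms
proof (induction "card F" arbitrary: F hi rule: less_induct)
  case less
  show ?case
  proof (cases "F = {}")
    case True
    then show ?thesis using less.prems by simp
  next
    case False
    define x0 where "x0 = Max (snd ` F)"
    have "x0 \<in> snd ` F" unfolding x0_def using False less.prems(1) by (intro Max_in) auto
    then obtain k0 where last: "(k0, x0) \<in> F" by force
    have below_last: "x \<le> x0" if "(k, x) \<in> F" for k x
      unfolding x0_def using that less.prems(1) by (metis Max_ge finite_imageI image_eqI snd_conv)
    let ?F = "F - {(k0, x0)}"
    have rest: "\<forall>(k, x)\<in>?F. lo \<le> x \<and> x + 1 / \<rho> ^ k \<le> x0"
    proof (rule ballI)
      fix e assume "e \<in> ?F"
      then obtain k x where e: "e = (k, x)" "(k, x) \<in> F" "(k, x) \<noteq> (k0, x0)" by (cases e) auto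
      then have "x + 1 / \<rho> ^ k \<le> x0"
        using pattern_disjoint[of k x k0 x0] below_last last less.prems(2) by auto
      then show "case e of (k, x) \<Rightarrow> lo \<le> x \<and> x + 1 / \<rho> ^ k \<le> x0"
        using less.prems(3) e by auto
    qed
    have "card ?F < card F" using last less.prems(1) by (meson card_Diff1_less)
    then have "(\<Sum>(k, x)\<in>?F. 1 / \<rho> ^ k) \<le> x0 - lo"
      using less.hyps[of ?F x0] less.prems rest last by auto
    moreover have "(\<Sum>(k, x)\<in>F. 1 / \<rho> ^ k) = 1 / \<rho> ^ k0 + (\<Sum>(k, x)\<in>?F. 1 / \<rho> ^ k)"
      using last less.prems(1) by (simp add: sum.remove)
    moreover have "x0 + 1 / \<rho> ^ k0 \<le> hi" using less.prems(3) last by auto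
    ultimately show ?thesis by linarith
  qed
qed

definition window :: "real \<Rightarrow> real \<Rightarrow> nat \<Rightarrow> real set" where
  "window a L k = {x. (k, x) \<in> D \<and> a \<le> x \<and> x < a + L}"

definition window_count :: "nat \<Rightarrow> real \<Rightarrow> real \<Rightarrow> nat" where
  "window_count k a L = card (window a L k)"

lemma finite_window:
  assumes "L \<ge> 0"
  shows "finite (window a L k)"
proof (rule finite_if_finite_subsets_card_bdd[THEN conjunct1])
  fix G assume G: "G \<subseteq> window a L k" "finite G"
  have "(\<Sum>(k', x)\<in>(\<lambda>x. (k, x)) ` G. 1 / \<rho> ^ k') \<le> (a + L + 1) - a"
  proof (rule packing_bound)
    show "\<forall>(k', x)\<in>(\<lambda>x. (k, x)) ` G. a \<le> x \<and> x + 1 / \<rho> ^ k' \<le> a + L + 1"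
      using G(1) inverse_power_le_one[of k] unfolding window_def by fastforce
  qed (use G assms in \<open>auto simp: window_def\<close>)
  then have "real (card G) / \<rho> ^ k \<le> L + 1"
    by (simp add: sum.reindex inj_on_def)
  then have "real (card G) \<le> (L + 1) * \<rho> ^ k" using rho_pos by (simp add: divide_le_eq)
  then show "card G \<le> nat \<lceil>(L + 1) * \<rho> ^ k\<rceil>" by linarith
qed

lemma window_count_sum_le:
  assumes "L \<ge> 0"
  shows "(\<Sum>k=1..N. real (window_count k a L) / \<rho> ^ k) \<le> L + 1"
proof -
  have "(\<Sum>k=1..N. real (window_count k a L) / \<rho> ^ k) = (\<Sum>k=1..N. \<Sum>x\<in>window a L k. 1 / \<rho> ^ k)"
    unfolding window_count_def by simp
  also have "\<dots> = (\<Sum>(k, x)\<in>Sigma {1..N} (window a L). 1 / \<rho> ^ k)"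
    by (rule sum.Sigma) (use finite_window[OF assms] in auto)
  also have "\<dots> \<le> (a + L + 1) - a"
  proof (rule packing_bound)
    show "Sigma {1..N} (window a L) \<subseteq> D" unfolding window_def by auto
    show "\<forall>(k, x)\<in>Sigma {1..N} (window a L). a \<le> x \<and> x + 1 / \<rho> ^ k \<le> a + L + 1"
    proof clarify
      fix k x assume "x \<in> window a L k"
      then show "a \<le> x \<and> x + 1 / \<rho> ^ k \<le> a + L + 1"
        using inverse_power_le_one[of k] unfolding window_def by auto
    qed
  qed (use finite_window[OF assms] assms in auto)
  finally show ?thesis by simp
qed

lemma pattern_periodic_int: "(k, x + of_int m * p) \<in> D \<longleftrightarrow> (k, x) \<in> D"
proof -
  have nat: "(k, y + real n * p) \<in> D \<longleftrightarrow> (k, y) \<in> D" for y n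
  proof (induction n)
    case (Suc n)
    have "(k, y + real (Suc n) * p) \<in> D \<longleftrightarrow> (k, (y + real n * p) + p) \<in> D"
      by (simp add: algebra_simps)
    also have "\<dots> \<longleftrightarrow> (k, y) \<in> D" using pattern_periodic Suc by simp
    finally show ?case .
  qed simp
  show ?thesis
  proof (cases "m \<ge> 0")
    case True
    then show ?thesis using nat[of x "nat m"] by simp
  next
    case False
    then have "x = (x + of_int m * p) + real (nat (- m)) * p" by simp
    then show ?thesis using nat[of "x + of_int m * p" "nat (- m)"] by metis
  qed
qed

lemma window_count_shift: "window_count k (a + of_int m * p) L = window_count k a L"
proof -
  have "window (a + of_int m * p) L k = (\<lambda>x. x + of_int m * p) ` window a L k"
  proof (intro set_eqI iffI)
    fix y assume "y \<in> window (a + of_int m * p) L k"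
    then have "y - of_int m * p \<in> window a L k"
      unfolding window_def using pattern_periodic_int[of k "y - of_int m * p" m] by auto
    then show "y \<in> (\<lambda>x. x + of_int m * p) ` window a L k" by force
  qed (auto simp: window_def pattern_periodic_int)
  then show ?thesis unfolding window_count_def by (simp add: card_image)
qed

lemma window_count_add:
  assumes "L1 \<ge> 0" and "L2 \<ge> 0"
  shows "window_count k a (L1 + L2) = window_count k a L1 + window_count k (a + L1) L2"
proof -
  have "window a (L1 + L2) k = window a L1 k \<union> window (a + L1) L2 k"
    unfolding window_def using assms by auto
  moreover have "window a L1 k \<inter> window (a + L1) L2 k = {}" unfolding window_def by auto
  ultimately show ?thesis
    unfolding window_count_def using finite_window assms by (simp add: card_Un_disjoint)
qed

lemma window_count_period: "window_count k a p = window_count k 0 p"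
proof -
  obtain m :: int where c: "0 \<le> a - of_int m * p" "a - of_int m * p < p"
    using period_representative[OF period_pos] by blast
  define c where "c = a - of_int m * p"
  have "window_count k a p = window_count k c p"
    using window_count_shift[of k c m p] unfolding c_def by simp
  also have "\<dots> = window_count k c (p - c) + window_count k (0 + of_int 1 * p) c"
    using window_count_add[of "p - c" c k c] c unfolding c_def by simp
  also have "\<dots> = window_count k 0 p"
    using window_count_shift[of k 0 1 c] window_count_add[of c "p - c" k 0] c unfolding c_def
    by simp
  finally show ?thesis .
qed

definition freq :: "nat \<Rightarrow> real" where
  "freq k = real (window_count k 0 p)"

lemma freq_nonneg: "freq k \<ge> 0"
  unfolding freq_def by simp

lemma freq_outside:
  assumes "k \<notin> {1..N}"
  shows "freq k = 0"
proof -
  have "window 0 p k = {}" unfolding window_def using pattern_types assms by blast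
  then show ?thesis unfolding freq_def window_count_def by simp
qed

lemma freq_le_sum: "freq k \<le> (\<Sum>k=1..N. freq k)"
  using freq_nonneg freq_outside
  by (cases "k \<in> {1..N}") (auto intro: member_le_sum sum_nonneg)

lemma window_count_multiple: "real (window_count k a (real n * p)) = real n * freq k"
proof (induction n arbitrary: a)
  case 0
  have "window a 0 k = {}" unfolding window_def by auto
  then show ?case by (simp add: window_count_def)
next
  case (Suc n)
  have "window_count k a (real (Suc n) * p) = window_count k a p + window_count k (a + p) (real n * p)"
    using window_count_add[of p "real n * p" k a] period_pos by (simp add: algebra_simps)
  then show ?case using Suc window_count_period unfolding freq_def by (simp add: algebra_simps)
qed

lemma window_count_mono: "0 \<le> L1 \<Longrightarrow> L1 \<le> L2 \<Longrightarrow> window_count k a L1 \<le> window_count k a L2"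
  using window_count_add[of L1 "L2 - L1" k a] by simp

lemma window_count_estimate:
  assumes "L \<ge> 0"
  shows "\<bar>real (window_count k a L) - L / p * freq k\<bar> \<le> freq k"
proof -
  define q where "q = nat \<lfloor>L / p\<rfloor>"
  have "L / p \<ge> 0" using assms period_pos by simp
  then have "real q = of_int \<lfloor>L / p\<rfloor>" unfolding q_def by simp
  then have q: "real q \<le> L / p" "L / p \<le> real q + 1"
    using of_int_floor_le[of "L / p"] real_of_int_floor_add_one_ge[of "L / p"] by linarith+
  then have "real q * p \<le> L" "L \<le> real (Suc q) * p"
    using period_pos by (simp_all add: field_simps)
  then have "real (window_count k a (real q * p)) \<le> real (window_count k a L)"
    "real (window_count k a L) \<le> real (window_count k a (real (Suc q) * p))"
    using window_count_mono period_pos assms by auto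
  then have "real q * freq k \<le> real (window_count k a L)"
    "real (window_count k a L) \<le> (real q + 1) * freq k"
    unfolding window_count_multiple by (simp_all add: algebra_simps)
  moreover have "real q * freq k \<le> L / p * freq k"
    by (rule mult_right_mono[OF q(1) freq_nonneg])
  moreover have "L / p * freq k \<le> (real q + 1) * freq k"
    by (rule mult_right_mono[OF q(2) freq_nonneg])
  ultimately show ?thesis by (simp add: abs_le_iff algebra_simps)
qed

lemma tile_count_le_window_count:
  assumes "t \<in> {1..N}" and "occurs D m t a"
  shows "tile_count m t k \<le> real (window_count k a (\<rho> ^ m / \<rho> ^ t))"
proof -
  let ?L = "\<rho> ^ m / \<rho> ^ t"
  have "(\<lambda>w. a + w) ` {w. (k, w) \<in> supertile1 m t} \<subseteq> window a ?L k"
  proof clarify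
    fix w assume w: "(k, w) \<in> supertile1 m t"
    then have bounds: "0 \<le> w" "w + 1 / \<rho> ^ k \<le> ?L"
      using supertile1_bounds[OF assms(1) w] by auto
    moreover have "1 / \<rho> ^ k > 0" using rho_pos by simp
    ultimately have "w < ?L" by linarith
    then show "a + w \<in> window a ?L k"
      unfolding window_def using bounds assms(2) w unfolding occurs_def by auto
  qed
  then have "card ((\<lambda>w. a + w) ` {w. (k, w) \<in> supertile1 m t}) \<le> window_count k a ?L"
    unfolding window_count_def using finite_window[of ?L] rho_pos by (intro card_mono) auto
  then show ?thesis unfolding tile_count_def by (simp add: card_image)
qed

text \<open>Comparing total lengths, an occurring supertile misses at most \<open>\<rho>\<^sup>k\<close> of the tiles of
  type \<open>k\<close> in the window it spans.\<close>
lemma tile_count_estimate: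
  assumes "t \<in> {1..N}" and "occurs D m t a"
  shows "\<bar>tile_count m t k - \<rho> ^ m / \<rho> ^ t / p * freq k\<bar> \<le> freq k + \<rho> ^ N"
proof (cases "k \<in> {1..N}")
  case False
  then show ?thesis using tile_count_outside[OF assms(1) False] freq_outside[OF False] rho_pos by simp
next
  case True
  define L where "L = \<rho> ^ m / \<rho> ^ t"
  have "L \<ge> 0" unfolding L_def using rho_pos by simp
  note le = tile_count_le_window_count[OF assms, folded L_def]
  have "(\<Sum>k'=1..N. (real (window_count k' a L) - tile_count m t k') / \<rho> ^ k')
      = (\<Sum>k'=1..N. real (window_count k' a L) / \<rho> ^ k') - total_length (tile_count m t)"
    unfolding total_length_def by (simp add: sum_subtractf diff_divide_distrib)
  also have "\<dots> \<le> 1"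
    using window_count_sum_le[OF \<open>L \<ge> 0\<close>, of a] total_length_tile_count[OF assms(1), of m]
    unfolding L_def by simp
  moreover have "(real (window_count k a L) - tile_count m t k) / \<rho> ^ k
      \<le> (\<Sum>k'=1..N. (real (window_count k' a L) - tile_count m t k') / \<rho> ^ k')"
    by (rule member_le_sum) (use True le rho_pos in auto)
  ultimately have "(real (window_count k a L) - tile_count m t k) / \<rho> ^ k \<le> 1" by linarith
  then have "real (window_count k a L) - tile_count m t k \<le> \<rho> ^ k"
    using rho_pos by (simp add: divide_le_eq)
  moreover have "\<rho> ^ k \<le> \<rho> ^ N" using True rho_gt_1 by (intro power_increasing) auto
  moreover have "\<bar>real (window_count k a L) - L / p * freq k\<bar> \<le> freq k"
    by (rule window_count_estimate[OF \<open>L \<ge> 0\<close>])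
  ultimately show ?thesis using le[of k] unfolding L_def by (simp add: abs_le_iff)
qed

lemma occurs_unbounded: "\<exists>m\<ge>K. \<exists>a. occurs D m 1 a"
proof -
  obtain t a where "t \<in> {1..N}" "occurs D (K + N) t a"
    using supertiles_occur by blast
  then have "occurs D (K + N + 1 - t) 1 a" using occurs_type_one[of t "K + N"] by auto
  moreover have "K + N + 1 - t \<ge> K" using \<open>t \<in> {1..N}\<close> by auto
  ultimately show ?thesis by blast
qed

lemma tile_count_deviation:
  assumes "occurs D n 1 a"
  shows "\<bar>tile_count n 1 k - \<rho> ^ n / \<rho> / p * freq k\<bar> \<le> (\<Sum>k=1..N. freq k) + \<rho> ^ N"
  using tile_count_estimate[of 1 n a k] assms N_ge_2 freq_le_sum[of k] by simp

text \<open>\<open>tile_count (m - j) 1\<close> and \<open>tile_count m 1 = (subst_op ^^ j) (tile_count (m - j) 1)\<close> are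
  within bounded distance of \<open>c \<cdot> freq\<close> and \<open>c \<rho>\<^sup>j \<cdot> freq\<close>, where \<open>c\<close> grows like \<open>\<rho>\<^sup>m\<close>. Since
  \<open>subst_op ^^ j\<close> enlarges errors at most by the factor \<open>2\<^sup>j\<close>, \<open>c\<close> times the defect of the
  eigenvalue equation stays bounded.\<close>
lemma freq_eigen:
  assumes "j \<in> children"
  shows "(subst_op ^^ j) freq k = \<rho> ^ j * freq k"
proof (rule ccontr)
  define \<delta> where "\<delta> = (subst_op ^^ j) freq k - \<rho> ^ j * freq k"
  assume "(subst_op ^^ j) freq k \<noteq> \<rho> ^ j * freq k"
  then have "\<bar>\<delta>\<bar> > 0" unfolding \<delta>_def by simp
  define B where "B = (\<Sum>k=1..N. freq k) + \<rho> ^ N"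
  obtain n0 where n0: "(1 + 2 ^ j) * B * \<rho> * p / \<bar>\<delta>\<bar> < \<rho> ^ n0"
    using real_arch_pow[OF rho_gt_1] by blast
  obtain m a where m: "m \<ge> n0 + j" "occurs D m 1 a" using occurs_unbounded by blast
  then obtain a' where a': "occurs D (m - j) 1 a'"
    using occurs_child_type_one[OF _ assms] by fastforce
  define E where "E n k = tile_count n 1 k - \<rho> ^ n / \<rho> / p * freq k" for n k
  define c where "c = \<rho> ^ (m - j) / \<rho> / p"
  have "tile_count m 1 = (subst_op ^^ j) (\<lambda>k. E (m - j) k + c * freq k)"
    using tile_count_iterate[of "m - j" j] m(1) unfolding E_def c_def by simp
  then have "tile_count m 1 k = (subst_op ^^ j) (E (m - j)) k + c * (subst_op ^^ j) freq k"
    by (simp add: subst_op_iter_linear)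
  moreover have "tile_count m 1 k = E m k + c * \<rho> ^ j * freq k"
    using m(1) unfolding E_def c_def by (simp add: power_add[symmetric])
  ultimately have "c * \<delta> = E m k - (subst_op ^^ j) (E (m - j)) k"
    unfolding \<delta>_def by (simp add: algebra_simps)
  moreover have "\<bar>E m k\<bar> \<le> B" using tile_count_deviation[OF m(2)] unfolding E_def B_def .
  moreover have "\<forall>k. \<bar>E (m - j) k\<bar> \<le> B"
    using tile_count_deviation[OF a'] unfolding E_def B_def by blast
  then have "\<bar>(subst_op ^^ j) (E (m - j)) k\<bar> \<le> 2 ^ j * B"
    using subst_op_iter_bound by blast
  ultimately have "c * \<bar>\<delta>\<bar> \<le> (1 + 2 ^ j) * B"
    unfolding c_def using rho_pos period_pos by (simp add: abs_mult algebra_simps)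
  moreover have "\<rho> ^ n0 / \<rho> / p * \<bar>\<delta>\<bar> \<le> c * \<bar>\<delta>\<bar>"
    unfolding c_def using m(1) rho_gt_1 rho_pos period_pos
    by (intro mult_right_mono divide_right_mono power_increasing) auto
  ultimately have "\<rho> ^ n0 / \<rho> / p * \<bar>\<delta>\<bar> \<le> (1 + 2 ^ j) * B" by linarith
  then have "\<rho> ^ n0 \<le> (1 + 2 ^ j) * B * \<rho> * p / \<bar>\<delta>\<bar>"
    using rho_pos period_pos \<open>\<bar>\<delta>\<bar> > 0\<close> by (simp add: field_simps)
  then show False using n0 by linarith
qed

lemma freq_nonzero: "\<exists>k. freq k > 0"
proof -
  obtain t a where "t \<in> {1..N}" "occurs D 0 t a"
    using supertiles_occur by blast
  then have "(t, a) \<in> D" unfolding occurs_def by auto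
  obtain m :: int where "0 \<le> a - of_int m * p" "a - of_int m * p < p"
    using period_representative[OF period_pos] by blast
  then have "a \<in> window (of_int m * p) p t"
    unfolding window_def using \<open>(t, a) \<in> D\<close> by auto
  then have "window_count t (0 + of_int m * p) p > 0"
    unfolding window_count_def using finite_window[of p] period_pos by (auto simp: card_gt_0_iff)
  then show ?thesis unfolding freq_def window_count_shift by auto
qed

lemma power_rational: "j \<in> children \<Longrightarrow> \<rho> ^ j \<in> \<rat>"
proof -
  assume "j \<in> children"
  obtain k where "freq k > 0" using freq_nonzero by blast
  have "\<forall>k. freq k \<in> \<int>" unfolding freq_def by auto
  then have "(subst_op ^^ j) freq k \<in> \<int>" by (rule subst_op_iter_Ints)
  moreover have "\<rho> ^ j = (subst_op ^^ j) freq k / freq k"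
    using freq_eigen[OF \<open>j \<in> children\<close>, of k] \<open>freq k > 0\<close> by simp
  moreover have "freq k \<in> \<int>" unfolding freq_def by auto
  ultimately show ?thesis by (metis Ints_subset_Rats Rats_divide subsetD)
qed

lemma periodic_pattern_impossible: False
proof -
  have "children \<noteq> {}" "0 \<notin> children" using N_in_children children_subset by auto
  then show False
    using ex_power_not_rational[OF rho_gt_1 finite_children _ _ sum_children] power_rational
    by blast
qed

end

lemma tile_eq_cbox: "tile \<rho> s u = cbox u (u + (\<chi> i. 1 / \<rho> ^ s i))"
  by (auto simp: tile_def mem_box_cart)

lemma translate_tile: "(\<lambda>x. l + x) ` tile \<rho> s u = tile \<rho> s (u + l)"
proof (intro set_eqI iffI)
  fix y assume "y \<in> tile \<rho> s (u + l)"
  then have "y - l \<in> tile \<rho> s u" unfolding tile_def by (simp add: algebra_simps)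
  then show "y \<in> (\<lambda>x. l + x) ` tile \<rho> s u" by force
qed (auto simp: tile_def)

lemma tile_inj:
  assumes "\<rho> > 1" and "tile \<rho> s u = tile \<rho> s' u'"
  shows "s = s' \<and> u = u'"
proof -
  have corners: "u \<in> tile \<rho> s u" "u + (\<chi> i. 1 / \<rho> ^ s i) \<in> tile \<rho> s u" for s u
    unfolding tile_def using assms(1) by auto
  have "u \<in> tile \<rho> s' u'" "u' \<in> tile \<rho> s u" using corners assms(2) by blast+
  then have "u = u'" unfolding tile_def by (auto simp: vec_eq_iff intro: order_antisym)
  moreover have "s i = s' i" for i
  proof -
    have "u + (\<chi> i. 1 / \<rho> ^ s i) \<in> tile \<rho> s' u'" "u' + (\<chi> i. 1 / \<rho> ^ s' i) \<in> tile \<rho> s u"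
      using corners assms(2) by blast+
    then have "1 / \<rho> ^ s i \<le> 1 / \<rho> ^ s' i" "1 / \<rho> ^ s' i \<le> 1 / \<rho> ^ s i"
      unfolding tile_def \<open>u = u'\<close> by auto
    then have "\<rho> ^ s i = \<rho> ^ s' i" using assms(1) by (simp add: divide_le_eq_1)
    then show ?thesis using assms(1) by (simp add: power_inject_exp)
  qed
  ultimately show ?thesis by auto
qed

lemma tile_Int_tile_not_null:
  assumes "\<rho> > 0" and "\<And>i. x' $ i < x $ i + 1 / \<rho> ^ s i" and "\<And>i. x $ i < x' $ i + 1 / \<rho> ^ s' i"
  shows "emeasure lebesgue (tile \<rho> s x \<inter> tile \<rho> s' x') \<noteq> 0"
proof -
  define lo where "lo = (\<chi> i. max (x $ i) (x' $ i))"
  define hi where "hi = (\<chi> i. min (x $ i + 1 / \<rho> ^ s i) (x' $ i + 1 / \<rho> ^ s' i))"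
  have lo_hi: "lo $ i < hi $ i" for i
    using assms(2,3)[of i] assms(1) unfolding lo_def hi_def by auto
  have "tile \<rho> s x \<inter> tile \<rho> s' x' = cbox lo hi"
    unfolding tile_eq_cbox Int_interval_cart lo_def hi_def by (auto simp: mem_box_cart less_eq_vec_def)
  moreover have "cbox lo hi \<noteq> {}"
    using lo_hi by (auto simp: interval_ne_empty_cart less_imp_le)
  then have "measure lebesgue (cbox lo hi) > 0"
    using lo_hi by (simp add: content_cbox_cart prod_pos)
  ultimately show ?thesis by (simp add: emeasure_eq_measure2)
qed

context inflation_rule
begin

lemma supertile_eq_product:
  "supertile b \<rho> N n t = {(s, x). \<forall>i. (s i, x $ i) \<in> supertile1 n (t i)}"
proof (induction n arbitrary: t)
  case 0
  show ?case by (auto simp: fun_eq_iff vec_eq_iff)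
next
  case (Suc n)
  show ?case
  proof (intro set_eqI iffI)
    fix e assume "e \<in> supertile b \<rho> N (Suc n) t"
    then obtain s u s' w where e: "e = (s', \<rho> ^ n *\<^sub>R u + w)" "(s, u) \<in> subd b \<rho> N t"
      "(s', w) \<in> supertile b \<rho> N n s" by auto
    have "(s' i, (\<rho> ^ n *\<^sub>R u + w) $ i) \<in> supertile1 (Suc n) (t i)" for i
    proof -
      have "(s i, u $ i) \<in> sub1 b \<rho> N (t i)" using e(2) unfolding subd_def by auto
      moreover have "(s' i, w $ i) \<in> supertile1 n (s i)" using e(3) Suc.IH by auto
      ultimately show ?thesis unfolding supertile1.simps(2)[of n] by auto
    qed
    then show "e \<in> {(s, x). \<forall>i. (s i, x $ i) \<in> supertile1 (Suc n) (t i)}" using e(1) by auto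
  next
    fix e assume "e \<in> {(s, x). \<forall>i. (s i, x $ i) \<in> supertile1 (Suc n) (t i)}"
    then obtain s' x where e: "e = (s', x)" "\<forall>i. (s' i, x $ i) \<in> supertile1 (Suc n) (t i)" by auto
    then have "\<forall>i. \<exists>c. x $ i = \<rho> ^ n * snd (fst c) + snd c \<and> fst c \<in> sub1 b \<rho> N (t i)
        \<and> (s' i, snd c) \<in> supertile1 n (fst (fst c))"
      unfolding supertile1.simps(2)[of n] by force
    then obtain F where F: "\<forall>i. x $ i = \<rho> ^ n * snd (fst (F i)) + snd (F i)
        \<and> fst (F i) \<in> sub1 b \<rho> N (t i) \<and> (s' i, snd (F i)) \<in> supertile1 n (fst (fst (F i)))"
      by metis
    define s where "s i = fst (fst (F i))" for i
    define u where "u = (\<chi> i. snd (fst (F i)))"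
    define w where "w = (\<chi> i. snd (F i))"
    have "(s, u) \<in> subd b \<rho> N t" unfolding subd_def s_def u_def using F by auto
    moreover have "(s', w) \<in> supertile b \<rho> N n s" unfolding Suc.IH s_def w_def using F by auto
    moreover have "x = \<rho> ^ n *\<^sub>R u + w" unfolding u_def w_def using F by (auto simp: vec_eq_iff)
    ultimately show "e \<in> supertile b \<rho> N (Suc n) t" using e(1) by auto
  qed
qed

end

lemma lattice_nonzero_coordinate:
  fixes L :: "(real^'n::finite) set"
  assumes "lattice L"
  obtains l i where "l \<in> L" and "l $ i \<noteq> 0"
proof -
  have "\<exists>l\<in>L. \<exists>i. l $ i \<noteq> 0"
  proof (rule ccontr)
    assume "\<not> (\<exists>l\<in>L. \<exists>i. l $ i \<noteq> 0)"
    then have "L \<subseteq> {0}" by (auto simp: vec_eq_iff)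
    then have "span L \<subseteq> {0}" by (metis span_empty span_insert_0 span_mono subset_singletonD)
    moreover have "span L = UNIV" using assms unfolding lattice_def by blast
    moreover have "((\<chi> j. 1) :: real^'n) \<noteq> 0" by (simp add: vec_eq_iff)
    ultimately show False by blast
  qed
  then show thesis using that by blast
qed

locale inflation_tiling = inflation_rule +
  fixes T :: "(real^'n::finite) set set" and t :: "nat \<Rightarrow> 'n \<Rightarrow> nat" and v :: "nat \<Rightarrow> real^'n"
  assumes tessellation: "tessellation T"
    and level_types: "t n i \<in> {1..N}"
    and patches_nested: "patch b \<rho> N n (t n) (v n) \<subseteq> patch b \<rho> N (Suc n) (t (Suc n)) (v (Suc n))"
    and T_eq_Union: "T = (\<Union>n. patch b \<rho> N n (t n) (v n))"
begin

text \<open>By \<open>supertile_eq_product\<close>, \<open>level_pattern n i\<close> is the projection of the \<open>n\<close>-th patch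
  to the \<open>i\<close>-th axis, as pairs (type, left end point).\<close>
definition level_pattern :: "nat \<Rightarrow> 'n \<Rightarrow> (nat \<times> real) set" where
  "level_pattern n i = {(k, v n $ i + w) | k w. (k, w) \<in> supertile1 n (t n i)}"

definition axis_pattern :: "'n \<Rightarrow> (nat \<times> real) set" where
  "axis_pattern i = (\<Union>n. level_pattern n i)"

lemma mem_patch_iff:
  "A \<in> patch b \<rho> N n (t n) (v n) \<longleftrightarrow>
    (\<exists>s x. A = tile \<rho> s x \<and> (\<forall>j. (s j, x $ j) \<in> level_pattern n j))"
proof
  assume "A \<in> patch b \<rho> N n (t n) (v n)"
  then show "\<exists>s x. A = tile \<rho> s x \<and> (\<forall>j. (s j, x $ j) \<in> level_pattern n j)"
    unfolding patch_def supertile_eq_product level_pattern_def by fastforce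
next
  assume "\<exists>s x. A = tile \<rho> s x \<and> (\<forall>j. (s j, x $ j) \<in> level_pattern n j)"
  then obtain s x where sx: "A = tile \<rho> s x" "\<forall>j. (s j, x $ j) \<in> level_pattern n j"
    by blast
  have "\<forall>j. (s j, (x - v n) $ j) \<in> supertile1 n (t n j)"
  proof
    fix j
    obtain w where "x $ j = v n $ j + w" "(s j, w) \<in> supertile1 n (t n j)"
      using sx(2) unfolding level_pattern_def by blast
    then show "(s j, (x - v n) $ j) \<in> supertile1 n (t n j)" by simp
  qed
  then have "(s, x - v n) \<in> supertile b \<rho> N n (t n)" unfolding supertile_eq_product by auto
  then have "tile \<rho> s (v n + (x - v n)) \<in> patch b \<rho> N n (t n) (v n)" unfolding patch_def by blast
  then show "A \<in> patch b \<rho> N n (t n) (v n)" using sx(1) by simp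
qed

lemma level_pattern_nonempty: "\<exists>e. e \<in> level_pattern n j"
  using supertile1_nonempty[OF level_types] unfolding level_pattern_def by fastforce

lemma level_pattern_Suc_mono: "level_pattern n i \<subseteq> level_pattern (Suc n) i"
proof
  fix e assume "e \<in> level_pattern n i"
  obtain G where G: "\<forall>j. G j \<in> level_pattern n j" using level_pattern_nonempty by metis
  define s where "s = (fst \<circ> G)(i := fst e)"
  define x where "x = (\<chi> j. if j = i then snd e else snd (G j))"
  have "tile \<rho> s x \<in> patch b \<rho> N n (t n) (v n)"
    unfolding mem_patch_iff s_def x_def using G \<open>e \<in> level_pattern n i\<close> by force
  then obtain s' x' where eq: "tile \<rho> s x = tile \<rho> s' x'"
      and mem: "\<forall>j. (s' j, x' $ j) \<in> level_pattern (Suc n) j"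
    using patches_nested mem_patch_iff by blast
  from tile_inj[OF rho_gt_1 eq] have "s' = s" "x' = x" by auto
  then have "(s i, x $ i) \<in> level_pattern (Suc n) i" using mem by simp
  then show "e \<in> level_pattern (Suc n) i" unfolding s_def x_def by simp
qed

lemma level_pattern_mono: "n \<le> n' \<Longrightarrow> level_pattern n i \<subseteq> level_pattern n' i"
  by (induction n' rule: dec_induct) (use level_pattern_Suc_mono in auto)

lemma mem_T_iff: "A \<in> T \<longleftrightarrow> (\<exists>s x. A = tile \<rho> s x \<and> (\<forall>j. (s j, x $ j) \<in> axis_pattern j))"
proof
  assume "A \<in> T"
  then obtain n where "A \<in> patch b \<rho> N n (t n) (v n)" unfolding T_eq_Union by blast
  then obtain s x where "A = tile \<rho> s x" "\<forall>j. (s j, x $ j) \<in> level_pattern n j"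
    unfolding mem_patch_iff by blast
  then show "\<exists>s x. A = tile \<rho> s x \<and> (\<forall>j. (s j, x $ j) \<in> axis_pattern j)"
    unfolding axis_pattern_def by blast
next
  assume "\<exists>s x. A = tile \<rho> s x \<and> (\<forall>j. (s j, x $ j) \<in> axis_pattern j)"
  then obtain s x where A: "A = tile \<rho> s x" and axis: "\<forall>j. (s j, x $ j) \<in> axis_pattern j"
    by blast
  have "\<forall>j. \<exists>n. (s j, x $ j) \<in> level_pattern n j" using axis unfolding axis_pattern_def by blast
  from choice[OF this] obtain level where level: "\<forall>j. (s j, x $ j) \<in> level_pattern (level j) j"
    by blast
  text \<open>There are finitely many coordinates, so one patch contains all of them.\<close>
  define n where "n = Max (range level)"
  have "(s j, x $ j) \<in> level_pattern n j" for j
  proof -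
    have "level j \<le> n" unfolding n_def by (rule Max_ge) auto
    then show ?thesis using level level_pattern_mono[OF \<open>level j \<le> n\<close>] by blast
  qed
  then have "A \<in> patch b \<rho> N n (t n) (v n)" unfolding mem_patch_iff A by blast
  then show "A \<in> T" unfolding T_eq_Union by blast
qed

lemma axis_pattern_nonempty: "\<exists>e. e \<in> axis_pattern j"
  using level_pattern_nonempty unfolding axis_pattern_def by blast

lemma axis_pattern_types: "(k, a) \<in> axis_pattern i \<Longrightarrow> k \<in> {1..N}"
  unfolding axis_pattern_def level_pattern_def using supertile1_bounds[OF level_types] by blast

lemma tile_through:
  assumes "(k, a) \<in> axis_pattern i" and "\<forall>j. G j \<in> axis_pattern j"
  shows "tile \<rho> ((fst \<circ> G)(i := k)) (\<chi> j. if j = i then a else snd (G j)) \<in> T"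
proof -
  have "\<forall>j. (((fst \<circ> G)(i := k)) j, (\<chi> j. if j = i then a else snd (G j)) $ j) \<in> axis_pattern j"
    using assms by auto
  then show ?thesis unfolding mem_T_iff by blast
qed

lemma axis_pattern_translate:
  assumes "(k, a) \<in> axis_pattern i" and "\<forall>A\<in>T. (\<lambda>x. l + x) ` A \<in> T"
  shows "(k, a + l $ i) \<in> axis_pattern i"
proof -
  obtain G where G: "\<forall>j. G j \<in> axis_pattern j" using axis_pattern_nonempty by metis
  define s where "s = (fst \<circ> G)(i := k)"
  define x where "x = (\<chi> j. if j = i then a else snd (G j))"
  have "tile \<rho> s x \<in> T" unfolding s_def x_def by (rule tile_through[OF assms(1) G])
  then have "tile \<rho> s (x + l) \<in> T" using assms(2) translate_tile by metis
  then obtain s' x' where eq: "tile \<rho> s (x + l) = tile \<rho> s' x'"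
      and mem: "\<forall>j. (s' j, x' $ j) \<in> axis_pattern j"
    using mem_T_iff by blast
  from tile_inj[OF rho_gt_1 eq] have "s' = s" "x' = x + l" by auto
  then show ?thesis using mem[rule_format, of i] unfolding s_def x_def by simp
qed

lemma axis_pattern_disjoint:
  assumes "(k, a) \<in> axis_pattern i" and "(k', a') \<in> axis_pattern i" and "a \<le> a'"
    and "(k, a) \<noteq> (k', a')"
  shows "a + 1 / \<rho> ^ k \<le> a'"
proof (rule ccontr)
  assume overlap: "\<not> a + 1 / \<rho> ^ k \<le> a'"
  obtain G where G: "\<forall>j. G j \<in> axis_pattern j" using axis_pattern_nonempty by metis
  define s where "s = (fst \<circ> G)(i := k)"
  define x where "x = (\<chi> j. if j = i then a else snd (G j))"
  define s' where "s' = (fst \<circ> G)(i := k')"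
  define x' where "x' = (\<chi> j. if j = i then a' else snd (G j))"
  have "tile \<rho> s x \<in> T" "tile \<rho> s' x' \<in> T"
    unfolding s_def x_def s'_def x'_def using tile_through G assms(1,2) by blast+
  moreover have "tile \<rho> s x \<noteq> tile \<rho> s' x'"
  proof
    assume "tile \<rho> s x = tile \<rho> s' x'"
    from tile_inj[OF rho_gt_1 this] have "s i = s' i" "x $ i = x' $ i" by auto
    then show False using assms(4) unfolding s_def x_def s'_def x'_def by simp
  qed
  ultimately have "emeasure lebesgue (tile \<rho> s x \<inter> tile \<rho> s' x') = 0"
    using tessellation unfolding tessellation_def by blast
  moreover have "1 / \<rho> ^ k' > 0" using rho_pos by simp
  then have "a < a' + 1 / \<rho> ^ k'" using assms(3) by linarith
  then have "emeasure lebesgue (tile \<rho> s x \<inter> tile \<rho> s' x') \<noteq> 0"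
    using overlap rho_pos
    by (intro tile_Int_tile_not_null) (auto simp: s_def x_def s'_def x'_def)
  ultimately show False by simp
qed

lemma not_lattice_periodic:
  assumes "lattice L" and "\<forall>l\<in>L. (\<lambda>A. (\<lambda>x. l + x) ` A) ` T = T"
  shows False
proof -
  obtain l i where l: "l \<in> L" "l $ i \<noteq> 0" using lattice_nonzero_coordinate[OF assms(1)] .
  have "- l \<in> L" using assms(1) l(1) unfolding lattice_def by (metis diff_0)
  have shift: "(k, a + m $ i) \<in> axis_pattern i" if "(k, a) \<in> axis_pattern i" "m \<in> L" for k a m
    using axis_pattern_translate[OF that(1)] assms(2) that(2) by blast
  define p where "p = \<bar>l $ i\<bar>"
  have shift_p: "(k, a + p) \<in> axis_pattern i" "(k, a - p) \<in> axis_pattern i"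
    if "(k, a) \<in> axis_pattern i" for k a
    using shift[OF that l(1)] shift[OF that \<open>- l \<in> L\<close>] unfolding p_def
    by (auto simp: abs_if)
  have periodic: "(k, a + p) \<in> axis_pattern i \<longleftrightarrow> (k, a) \<in> axis_pattern i" for k a
    using shift_p(1)[of k a] shift_p(2)[of k "a + p"] by auto
  interpret periodic_pattern N b \<rho> "axis_pattern i" p
  proof
    show "p > 0" unfolding p_def using l(2) by simp
    show "\<exists>t'\<in>{1..N}. \<exists>a. occurs (axis_pattern i) n t' a" for n
      using level_types unfolding occurs_def axis_pattern_def level_pattern_def by blast
  qed (use axis_pattern_types periodic axis_pattern_disjoint in auto)
  show False by (rule periodic_pattern_impossible)
qed

end

theorem mainTheorem9:
  fixes N :: nat and b :: "nat \<Rightarrow> nat" and \<rho> :: real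
    and T :: "(real^'n::finite) set set"
  assumes "N \<ge> 2"
    and "\<forall>j\<in>{1..N}. b j \<in> {0, 1}"
    and "b N = 1"
    and "(\<Sum>j=1..N. b j * 2 ^ (N - j)) > 1"
    and "\<rho> ^ N - (\<Sum>j=1..N. real (b j) * \<rho> ^ (N - j)) = 0"
    and "\<forall>x::real. x ^ N - (\<Sum>j=1..N. real (b j) * x ^ (N - j)) = 0 \<longrightarrow> x \<le> \<rho>"
    and "inflation_tessellation b \<rho> N T"
  shows "\<not> periodic T"
proof
  assume "periodic T"
  then obtain L where L: "lattice L" "\<forall>l\<in>L. (\<lambda>A. (\<lambda>x. l + x) ` A) ` T = T"
    unfolding periodic_def by blast
  have "\<rho> > 1" using largest_root_gt_one[OF assms(1-4,6)] .
  moreover have "(\<Sum>j=1..N. real (b j) / \<rho> ^ j) = 1"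
    using sum_div_power_eq_one_if_root[OF _ assms(5)] \<open>\<rho> > 1\<close> by simp
  ultimately interpret inflation_rule N b \<rho>
    using assms(1-3) by unfold_locales auto
  obtain t v where "tessellation T" "\<forall>n i. t n i \<in> {1..N}"
    "\<forall>n. patch b \<rho> N n (t n) (v n) \<subseteq> patch b \<rho> N (Suc n) (t (Suc n)) (v (Suc n))"
    "T = (\<Union>n. patch b \<rho> N n (t n) (v n))"
    using assms(7) unfolding inflation_tessellation_def by blast
  then interpret inflation_tiling N b \<rho> T t v
    by unfold_locales auto
  show False by (rule not_lattice_periodic[OF L])
qed

end
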